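(* Let $\underline{p}_g\le \bar{p}_g$, $p_{g0}\in\mathbb{R}$, and $\alpha_g\neq 0$ be real constants. For $\Delta\in\mathbb{R}$ define \[ p_{gk}(\Delta):=\mathrm{proj}_{[\underline{p}_g,\bar{p}_g]}(p_{g0}+\alpha_g\Delta),\qquad \tilde{p}_{gk}(\Delta):=\min\{\bar{p}_g,\,p_{g0}+\alpha_g\Delta\}, \] and for $\epsilon>0$ define \[ p_{gk}^\epsilon(\Delta):=\underline{p}_g+\epsilon\ln\left[1+\frac{\exp[(\bar{p}_g-\underline{p}_g)/\epsilon]}{1+\exp[(\bar{p}_g-p_{g0}-\alpha_g\Delta)/\epsilon]}\right],\qquad \tilde{p}_{gk}^{\epsilon}(\Delta):=\bar{p}_g-\epsilon\ln\left[1+\exp\left(\frac{\bar{p}_g-p_{g0}-\alpha_g\Delta}{\epsilon}\right)\right]. \] Then, as $\epsilon\to 0$, \[ \sup\left\{|p_{gk}^\epsilon(\Delta)-p_{gk}(\Delta)|:\Delta\in\mathbb{R}\right\}\to 0 \quad\text{and}\quad \sup\left\{|\tilde{p}_{gk}^{\epsilon}(\Delta)-\tilde{p}_{gk}(\Delta)|:\Delta\ge (\underline{p}_g-p_{g0})/\alpha_g\right\}\to 0. \]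
   Context: $\mathrm{proj}_{[a,b]}(x)=\max\{a,\min\{b,x\}\}$ denotes projection onto the interval $[a,b]$. In the application, $p_{gk}(\Delta)$ models the active power output of generator $g$ in contingency $k$ as a function of the system-wide imbalance $\Delta$, with base-case output $p_{g0}$, bounds $\underline{p}_g,\bar{p}_g$, and participation factor $\alpha_g$. *)

theory Defs
  imports Complex_Main
begin

definition proj :: "real \<Rightarrow> real \<Rightarrow> real \<Rightarrow> real" where
  "proj a b x = max a (min b x)"

end

theory Submission imports Defs begin

text \<open>With \<open>softplus \<epsilon> y = \<epsilon> ln (1 + exp (y / \<epsilon>))\<close>, which lies between
  \<open>max 0 y\<close> and \<open>max 0 y + \<epsilon> ln 2\<close>, the smoothed outputs are
  \<open>p_lo + softplus \<epsilon> (p_up - p_lo - softplus \<epsilon> (p_up - x))\<close> and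
  \<open>p_up - softplus \<epsilon> (p_up - x)\<close> with \<open>x = p\<^sub>0 + \<alpha> \<Delta>\<close>, while the exact
  outputs are the same expressions with \<open>max 0\<close> in place of \<open>softplus \<epsilon>\<close>.
  Monotonicity of \<open>max 0\<close> then bounds both errors by \<open>\<epsilon> ln 2\<close> for every \<open>\<Delta>\<close>,
  so both suprema tend to 0.\<close>

definition softplus :: "real \<Rightarrow> real \<Rightarrow> real" where
  "softplus e y = e * ln (1 + exp (y / e))"

lemma ln_one_plus_exp_bounds:
  fixes t :: real
  shows "max 0 t \<le> ln (1 + exp t)" and "ln (1 + exp t) \<le> max 0 t + ln 2"
proof -
  have "t \<le> ln (1 + exp t)"
    using ln_le_cancel_iff[of "exp t" "1 + exp t"] by (simp add: add_pos_pos)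
  moreover have "0 \<le> ln (1 + exp t)" by (simp add: add_pos_pos)
  ultimately show "max 0 t \<le> ln (1 + exp t)" by simp
  have "1 + exp t \<le> 2 * exp (max 0 t)"
    by (cases "t \<le> 0") (auto simp: max_def)
  then have "ln (1 + exp t) \<le> ln (2 * exp (max 0 t))" by (simp add: add_pos_pos)
  then show "ln (1 + exp t) \<le> max 0 t + ln 2" by (simp add: ln_mult)
qed

lemma softplus_bounds:
  fixes e y :: real
  assumes "e > 0"
  shows "max 0 y \<le> softplus e y" and "softplus e y \<le> max 0 y + e * ln 2"
proof -
  have scale: "e * max 0 (y / e) = max 0 y"
    using assms by (auto simp: max_def zero_le_divide_iff)
  have "e * max 0 (y / e) \<le> e * ln (1 + exp (y / e))"
    using ln_one_plus_exp_bounds(1) assms by (intro mult_left_mono) auto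
  then show "max 0 y \<le> softplus e y"
    unfolding softplus_def scale .
  have "e * ln (1 + exp (y / e)) \<le> e * (max 0 (y / e) + ln 2)"
    using ln_one_plus_exp_bounds(2) assms by (intro mult_left_mono) auto
  then show "softplus e y \<le> max 0 y + e * ln 2"
    unfolding softplus_def distrib_left scale .
qed

lemma exp_softplus_div:
  fixes e y :: real
  assumes "e > 0"
  shows "exp (softplus e y / e) = 1 + exp (y / e)"
  using assms by (simp add: softplus_def add_pos_pos)

lemma smoothed_proj_eq_softplus:
  fixes a b e x :: real
  assumes "e > 0"
  shows "a + e * ln (1 + exp ((b - a) / e) / (1 + exp ((b - x) / e)))
           = a + softplus e (b - a - softplus e (b - x))"
proof -
  have "exp ((b - a - softplus e (b - x)) / e) = exp ((b - a) / e) / exp (softplus e (b - x) / e)"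
    by (simp add: exp_diff diff_divide_distrib)
  then have "exp ((b - a) / e) / (1 + exp ((b - x) / e))
          = exp ((b - a - softplus e (b - x)) / e)"
    by (simp add: exp_softplus_div[OF assms])
  then show ?thesis by (simp add: softplus_def)
qed

lemma proj_eq_nested_max: "proj a b x = a + max 0 (b - a - max 0 (b - x))"
  unfolding proj_def by (simp add: max_def min_def)

lemma abs_smoothed_proj_minus_proj:
  fixes a b e x :: real
  assumes "e > 0"
  shows "\<bar>a + e * ln (1 + exp ((b - a) / e) / (1 + exp ((b - x) / e))) - proj a b x\<bar>
           \<le> e * ln 2"
proof -
  define z where "z = b - a - max 0 (b - x)"
  define z' where "z' = b - a - softplus e (b - x)"
  have "z - e * ln 2 \<le> z'" "z' \<le> z"
    using softplus_bounds[OF assms, of "b - x"] unfolding z_def z'_def by linarith+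
  then have "max 0 z - e * ln 2 \<le> max 0 z'" "max 0 z' \<le> max 0 z"
    by (simp_all add: max_def)
  moreover have "\<bar>a + softplus e z' - (a + max 0 z)\<bar> \<le> e * ln 2"
    using calculation softplus_bounds[OF assms, of z'] unfolding abs_le_iff by linarith
  ultimately show ?thesis
    unfolding smoothed_proj_eq_softplus[OF assms] proj_eq_nested_max z_def z'_def by simp
qed

lemma abs_smoothed_min_minus_min:
  fixes b e x :: real
  assumes "e > 0"
  shows "\<bar>b - e * ln (1 + exp ((b - x) / e)) - min b x\<bar> \<le> e * ln 2"
proof -
  have "min b x = b - max 0 (b - x)" by (simp add: max_def min_def)
  then show ?thesis
    using softplus_bounds[OF assms, of "b - x"] assms
    unfolding softplus_def by (simp add: abs_le_iff)
qed

lemma Sup_abs_tendsto_0_at_right: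
  fixes f :: "real \<Rightarrow> 'a \<Rightarrow> real" and C :: real
  assumes "\<exists>d. P d" and bound: "\<And>e d. e > 0 \<Longrightarrow> P d \<Longrightarrow> \<bar>f e d\<bar> \<le> C * e"
  shows "((\<lambda>e. Sup {\<bar>f e d\<bar> | d. P d}) \<longlongrightarrow> 0) (at_right 0)"
proof (rule tendsto_sandwich)
  have "0 \<le> Sup {\<bar>f e d\<bar> | d. P d} \<and> Sup {\<bar>f e d\<bar> | d. P d} \<le> C * e" if "e > 0" for e
  proof -
    obtain d0 where "P d0" using assms(1) by blast
    have "bdd_above {\<bar>f e d\<bar> | d. P d}"
      using bound[OF that] by (auto simp: bdd_above_def)
    then have "\<bar>f e d0\<bar> \<le> Sup {\<bar>f e d\<bar> | d. P d}"
      using \<open>P d0\<close> by (intro cSup_upper) auto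
    moreover have "Sup {\<bar>f e d\<bar> | d. P d} \<le> C * e"
      using \<open>P d0\<close> bound[OF that] by (intro cSup_least) auto
    ultimately show ?thesis by linarith
  qed
  then show "\<forall>\<^sub>F e in at_right 0. 0 \<le> Sup {\<bar>f e d\<bar> | d. P d}"
    and "\<forall>\<^sub>F e in at_right 0. Sup {\<bar>f e d\<bar> | d. P d} \<le> C * e"
    by (auto intro: eventually_at_right_less[THEN eventually_mono])
  show "((\<lambda>_. 0) \<longlongrightarrow> (0::real)) (at_right 0)" by simp
  show "((\<lambda>e. C * e) \<longlongrightarrow> 0) (at_right (0::real))"
    using tendsto_mult_right_zero[OF tendsto_ident_at[of 0 "{0<..}"], of C] by simp
qed

theorem proposition1:
  fixes plo pup p0 \<alpha> :: real
  assumes "plo \<le> pup" and "\<alpha> \<noteq> 0"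
  defines "p \<equiv> (\<lambda>\<Delta>. proj plo pup (p0 + \<alpha> * \<Delta>))"
      and "pt \<equiv> (\<lambda>\<Delta>. min pup (p0 + \<alpha> * \<Delta>))"
      and "pe \<equiv> (\<lambda>\<epsilon> \<Delta>. plo + \<epsilon> * ln (1 + exp ((pup - plo) / \<epsilon>)
                 / (1 + exp ((pup - p0 - \<alpha> * \<Delta>) / \<epsilon>))))"
      and "pte \<equiv> (\<lambda>\<epsilon> \<Delta>. pup - \<epsilon> * ln (1 + exp ((pup - p0 - \<alpha> * \<Delta>) / \<epsilon>)))"
  shows "((\<lambda>\<epsilon>. Sup {\<bar>pe \<epsilon> \<Delta> - p \<Delta>\<bar> | \<Delta>. True}) \<longlongrightarrow> 0) (at_right 0)
       \<and> ((\<lambda>\<epsilon>. Sup {\<bar>pte \<epsilon> \<Delta> - pt \<Delta>\<bar> | \<Delta>. \<Delta> \<ge> (plo - p0) / \<alpha>}) \<longlongrightarrow> 0) (at_right 0)"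
proof
  have "\<bar>pe e \<Delta> - p \<Delta>\<bar> \<le> ln 2 * e" if "e > 0" for e \<Delta>
    using abs_smoothed_proj_minus_proj[OF that, of plo pup "p0 + \<alpha> * \<Delta>"]
    unfolding pe_def p_def by (simp add: diff_diff_eq mult.commute)
  then show "((\<lambda>\<epsilon>. Sup {\<bar>pe \<epsilon> \<Delta> - p \<Delta>\<bar> | \<Delta>. True}) \<longlongrightarrow> 0) (at_right 0)"
    by (intro Sup_abs_tendsto_0_at_right) auto
  have "\<bar>pte e \<Delta> - pt \<Delta>\<bar> \<le> ln 2 * e" if "e > 0" for e \<Delta>
    using abs_smoothed_min_minus_min[OF that, of pup "p0 + \<alpha> * \<Delta>"]
    unfolding pte_def pt_def by (simp add: diff_diff_eq mult.commute)
  then show "((\<lambda>\<epsilon>. Sup {\<bar>pte \<epsilon> \<Delta> - pt \<Delta>\<bar> | \<Delta>. \<Delta> \<ge> (plo - p0) / \<alpha>}) \<longlongrightarrow> 0) (at_right 0)"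
    by (intro Sup_abs_tendsto_0_at_right) auto
qed

end
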